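(* Let $\epsilon>0$, $T\in\mathbb{N}$, $B\ge T$, and define $k=2\lfloor B/T\rfloor$. Then there exists an instance of the UVP problem (with total budget $B$, maximum per-configuration budget $T$, smoothness parameter $\epsilon$) with $k$ clusters, each of radius $r_k>0$, such that no algorithm can achieve an approximation factor exceeding $(1-\epsilon r_k)$, where $r_k$ is the optimal clustering radius for $k$ clusters.
   Context: UVP problem: $A:\mathbb{R}^d\times[T]\to[0,1]$ is an unknown function ($[T]=\{1,\dots,T\}$); a finite set $\mathcal{X}\subset\mathbb{R}^d$ is known. The goal is $\max_{b_1,\dots,b_n}\max_{i}A(\mathbf{x}_i,b_i)$ subject to $\sum_i b_i\le B$, $b_i\in[T]$. Values are revealed only by evaluation; obtaining $A(\mathbf{x},b)$ requires evaluating $A(\mathbf{x},1),\dots,A(\mathbf{x},b)$ sequentially, costing $b$ units of budget. Instances satisfy Assumption 1 (monotonicity): $b_1\le b_2\Rightarrow A(\mathbf{x},b_1)\le A(\mathbf{x},b_2)$; and Assumption 2 (smoothness): for all $\mathbf{x}_i,\mathbf{x}_j\in\mathcal{X}$, $\min_{b\in[T]}A(\mathbf{x}_i,b)/A(\mathbf{x}_j,b)\ge1-\epsilon\|\mathbf{x}_i-\mathbf{x}_j\|_2$ (ratio $=1$ if both values are $0$, $=+\infty$ if only the denominator is $0$). The optimal clustering radius for $m$ clusters is $\min_{\mathcal{C}\subseteq\mathcal{X},|\mathcal{C}|=m}\max_{\mathbf{x}\in\mathcal{X}}\min_{\mathbf{c}\in\mathcal{C}}\|\mathbf{x}-\mathbf{c}\|_2$.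 An algorithm (possibly randomized) adaptively evaluates values within total budget $B$ and outputs $\mathbf{x}^{Alg}$; it achieves approximation factor $\alpha$ on an instance if $\mathbb{E}[A(\mathbf{x}^{Alg},T)]\ge\alpha\,\max_{\mathbf{x}\in\mathcal{X}}A(\mathbf{x},T)$. *)

theory Defs
  imports "HOL-Probability.Probability"
begin

text \<open>Points of R^d are encoded as functions nat => real vanishing at all
coordinates >= d (the dimension d is existentially quantified in the statement).\<close>

type_synonym point = "nat \<Rightarrow> real"

definition Rd :: "nat \<Rightarrow> point set" where
  "Rd d = {x. \<forall>i\<ge>d. x i = 0}"

definition ddist :: "nat \<Rightarrow> point \<Rightarrow> point \<Rightarrow> real" where
  "ddist d x y = sqrt (\<Sum>i<d. (x i - y i)^2)"

definition opt_radius :: "nat \<Rightarrow> point set \<Rightarrow> nat \<Rightarrow> real" where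
  "opt_radius d X m =
     Min {Max ((\<lambda>x. Min ((\<lambda>c. ddist d x c) ` C)) ` X) | C. C \<subseteq> X \<and> card C = m}"

definition ratio :: "real \<Rightarrow> real \<Rightarrow> ereal" where
  "ratio a b = (if a = 0 \<and> b = 0 then 1 else if b = 0 then \<infinity> else ereal (a / b))"

text \<open>A valid UVP value function: values in [0,1], Assumption 1 (monotone in the
budget), Assumption 2 (smoothness on X).\<close>
definition valid_instance :: "nat \<Rightarrow> point set \<Rightarrow> nat \<Rightarrow> real \<Rightarrow> (point \<Rightarrow> nat \<Rightarrow> real) \<Rightarrow> bool" where
  "valid_instance d X T \<epsilon> A \<longleftrightarrow>
     (\<forall>x\<in>Rd d. \<forall>b\<in>{1..T}. 0 \<le> A x b \<and> A x b \<le> 1) \<and>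
     (\<forall>x\<in>Rd d. \<forall>b1\<in>{1..T}. \<forall>b2\<in>{1..T}. b1 \<le> b2 \<longrightarrow> A x b1 \<le> A x b2) \<and>
     (\<forall>xi\<in>X. \<forall>xj\<in>X. \<forall>b\<in>{1..T}.
        ereal (1 - \<epsilon> * ddist d xi xj) \<le> ratio (A xi b) (A xj b))"

text \<open>A deterministic adaptive algorithm: a query policy (given the history of
observations, either ask for the next budget level of a configuration, or stop)
and an output rule (given the final history, output a configuration).\<close>
type_synonym history = "(point \<times> real) list"
type_synonym det_alg = "(history \<Rightarrow> point option) \<times> (history \<Rightarrow> point)"

definition cnt :: "point \<Rightarrow> history \<Rightarrow> nat" where
  "cnt x h = length (filter (\<lambda>p. fst p = x) h)"

text \<open>Execution with remaining budget n (each evaluation costs one unit; evaluating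
configuration x again reveals its next budget level; at most T levels per
configuration).\<close>
fun run :: "nat \<Rightarrow> det_alg \<Rightarrow> point set \<Rightarrow> nat \<Rightarrow> (point \<Rightarrow> nat \<Rightarrow> real) \<Rightarrow> history \<Rightarrow> point" where
  "run 0 alg X T A h = snd alg h"
| "run (Suc n) alg X T A h =
     (case fst alg h of
        None \<Rightarrow> snd alg h
      | Some x \<Rightarrow> if x \<in> X \<and> cnt x h < T
                  then run n alg X T A (h @ [(x, A x (cnt x h + 1))])
                  else snd alg h)"

definition alg_output :: "nat \<Rightarrow> point set \<Rightarrow> nat \<Rightarrow> det_alg \<Rightarrow> (point \<Rightarrow> nat \<Rightarrow> real) \<Rightarrow> point" where
  "alg_output B X T alg A = run B alg X T A []"

text \<open>A randomized algorithm: a probability distribution over deterministic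
algorithms, whose outputs lie in X and whose performance is measurable.\<close>
definition rand_alg :: "point set \<Rightarrow> nat \<Rightarrow> nat \<Rightarrow> det_alg measure \<Rightarrow> bool" where
  "rand_alg X T B M \<longleftrightarrow> prob_space M \<and>
     (\<forall>alg\<in>space M. \<forall>h. snd alg h \<in> X) \<and>
     (\<forall>A. (\<lambda>alg. A (alg_output B X T alg A) T) \<in> borel_measurable M)"

definition expected_value :: "nat \<Rightarrow> point set \<Rightarrow> nat \<Rightarrow> det_alg measure \<Rightarrow> (point \<Rightarrow> nat \<Rightarrow> real) \<Rightarrow> real" where
  "expected_value B X T M A = (\<integral>alg. A (alg_output B X T alg A) T \<partial>M)"

end

theory Submission
  imports Defs
begin

(* Yao's principle applied to a family of planted instances. Put 2k points on a line in
   k pairs: the two points of a pair are s = 1/(8 eps) apart and distinct pairs are at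
   least 15 s apart, so the optimal k-radius is at most s and smoothness imposes nothing
   across pairs. All values are 0 below level T; at level T every point has value 1/2,
   except the points of one pair j, which have value t in {0, 1}.
   A deterministic algorithm reaches level T for at most B div T points, so its run on
   the all-1/2 instance touches at most B div T pairs; on every other pair j it runs
   identically for t = 0 and t = 1, whence 2 payoff(j,0) + payoff(j,1) <= 3/2 rather
   than <= 2. Summing over j and integrating over the randomness of the algorithm, an
   alpha-approximation forces 2 alpha k <= 3k/2 + (B div T)/2, i.e. alpha <= 7/8 for
   k = 2 (B div T), whereas alpha > 1 - eps r_k >= 7/8. *)

section \<open>Histories of a run\<close>

fun run_history :: "nat \<Rightarrow> det_alg \<Rightarrow> point set \<Rightarrow> nat \<Rightarrow> (point \<Rightarrow> nat \<Rightarrow> real) \<Rightarrow> history \<Rightarrow> history" where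
  "run_history 0 alg X T A h = h"
| "run_history (Suc n) alg X T A h =
     (case fst alg h of
        None \<Rightarrow> h
      | Some x \<Rightarrow> if x \<in> X \<and> cnt x h < T
                  then run_history n alg X T A (h @ [(x, A x (cnt x h + 1))])
                  else h)"

lemma run_eq_output_of_run_history: "run n alg X T A h = snd alg (run_history n alg X T A h)"
  by (induction n arbitrary: h) (auto split: option.split)

lemma run_history_extends: "\<exists>e. run_history n alg X T A h = h @ e"
proof (induction n arbitrary: h)
  case (Suc n)
  then show ?case
    by (auto split: option.split) (metis append.assoc)
qed simp

lemma length_run_history_le: "length (run_history n alg X T A h) \<le> length h + n"
proof (induction n arbitrary: h)
  case (Suc n)
  have "length (run_history n alg X T A (h @ [p])) \<le> length h + Suc n" for p
    using Suc.IH[of "h @ [p]"] by simp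
  then show ?case by (auto split: option.split)
qed simp

lemma cnt_append: "cnt x (h @ e) = cnt x h + cnt x e"
  by (simp add: cnt_def)

lemma cnt_Cons: "cnt x (a # h) = (if fst a = x then 1 else 0) + cnt x h"
  by (simp add: cnt_def)

lemma cnt_le_cnt_run_history: "cnt x h \<le> cnt x (run_history n alg X T A h)"
  using run_history_extends[of n alg X T A h] by (auto simp: cnt_append)

lemma sum_cnt_le_length: "finite P \<Longrightarrow> (\<Sum>x\<in>P. cnt x h) \<le> length h"
proof (induction h)
  case Nil
  then show ?case by (simp add: cnt_def)
next
  case (Cons a h)
  have "(\<Sum>x\<in>P. cnt x (a # h)) = (\<Sum>x\<in>P. if fst a = x then 1 else 0) + (\<Sum>x\<in>P. cnt x h)"
    by (simp add: cnt_Cons sum.distrib)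
  also have "(\<Sum>x\<in>P. if fst a = x then 1 else 0::nat) \<le> 1"
    using Cons.prems by (simp add: sum.delta)
  finally show ?case using Cons by simp
qed

lemma card_saturated_mult_le_length:
  assumes "finite X"
  shows "card {x\<in>X. T \<le> cnt x h} * T \<le> length h"
proof -
  let ?P = "{x\<in>X. T \<le> cnt x h}"
  have "card ?P * T \<le> (\<Sum>x\<in>?P. cnt x h)"
    using sum_bounded_below[of ?P T "\<lambda>x. cnt x h"] by simp
  also have "\<dots> \<le> length h"
    using assms by (intro sum_cnt_le_length) simp
  finally show ?thesis .
qed

lemma run_history_cong:
  assumes below: "\<forall>x\<in>X. \<forall>b<T. A' x b = A x b"
    and unseen: "\<forall>x\<in>X. A' x T \<noteq> A x T \<longrightarrow> cnt x (run_history n alg X T A h) < T"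
  shows "run_history n alg X T A' h = run_history n alg X T A h"
  using unseen
proof (induction n arbitrary: h)
  case (Suc n)
  show ?case
  proof (cases "fst alg h")
    case (Some x)
    show ?thesis
    proof (cases "x \<in> X \<and> cnt x h < T")
      case True
      let ?h = "h @ [(x, A x (cnt x h + 1))]"
      have step: "run_history (Suc n) alg X T A h = run_history n alg X T A ?h"
        using Some True by simp
      have same_value: "A' x (cnt x h + 1) = A x (cnt x h + 1)"
      proof (cases "cnt x h + 1 < T")
        case True
        then show ?thesis using below \<open>x \<in> X \<and> cnt x h < T\<close> by auto
      next
        case False
        then have last: "cnt x h + 1 = T" using True by simp
        then have "cnt x ?h = T" by (simp add: cnt_append cnt_def)
        then have "\<not> cnt x (run_history n alg X T A ?h) < T"
          using cnt_le_cnt_run_history[of x ?h n alg X T A] by simp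
        then show ?thesis using Suc.prems step True last by metis
      qed
      have "run_history n alg X T A' ?h = run_history n alg X T A ?h"
        using Suc.IH[of ?h] Suc.prems step by simp
      then show ?thesis using Some True same_value by simp
    next
      case False
      then show ?thesis using Some by auto
    qed
  qed simp
qed simp

section \<open>Planted instances\<close>

definition final_level_instance :: "point set \<Rightarrow> nat \<Rightarrow> (point \<Rightarrow> real) \<Rightarrow> point \<Rightarrow> nat \<Rightarrow> real" where
  "final_level_instance X T v x b = (if T \<le> b \<and> x \<in> X then v x else 0)"

lemma ratio_self: "ratio a a = 1"
  by (simp add: ratio_def one_ereal_def)

lemma ratio_nonneg: "0 \<le> a \<Longrightarrow> 0 \<le> b \<Longrightarrow> 0 \<le> ratio a b"
  by (simp add: ratio_def)

lemma ddist_nonneg: "0 \<le> ddist d x y"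
  by (simp add: ddist_def sum_nonneg)

lemma valid_final_level_instance:
  assumes "0 \<le> \<epsilon>" and range: "\<forall>x\<in>X. 0 \<le> v x \<and> v x \<le> 1"
    and separated: "\<forall>xi\<in>X. \<forall>xj\<in>X. v xi \<noteq> v xj \<longrightarrow> 1 \<le> \<epsilon> * ddist d xi xj"
  shows "valid_instance d X T \<epsilon> (final_level_instance X T v)"
  unfolding valid_instance_def
proof (intro conjI ballI impI)
  fix xi xj b assume xi: "xi \<in> X" and xj: "xj \<in> X"
  let ?A = "final_level_instance X T v"
  show "ereal (1 - \<epsilon> * ddist d xi xj) \<le> ratio (?A xi b) (?A xj b)"
  proof (cases "?A xi b = ?A xj b")
    case True
    have "1 - \<epsilon> * ddist d xi xj \<le> 1"
      using \<open>0 \<le> \<epsilon>\<close> ddist_nonneg[of d xi xj] by simp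
    then show ?thesis by (simp add: True ratio_self one_ereal_def)
  next
    case False
    then have "1 - \<epsilon> * ddist d xi xj \<le> 0"
      using separated xi xj by (auto simp: final_level_instance_def split: if_splits)
    moreover have "0 \<le> ratio (?A xi b) (?A xj b)"
      using range xi xj by (intro ratio_nonneg) (auto simp: final_level_instance_def)
    ultimately show ?thesis
      by (metis order_trans ereal_less_eq(3) zero_ereal_def)
  qed
qed (use range in \<open>auto simp: final_level_instance_def\<close>)

lemma run_history_final_level_cong:
  assumes "\<forall>x\<in>X. v' x \<noteq> v x \<longrightarrow> cnt x (run_history n alg X T (final_level_instance X T v) h) < T"
  shows "run_history n alg X T (final_level_instance X T v') h
       = run_history n alg X T (final_level_instance X T v) h"
  by (rule run_history_cong) (use assms in \<open>auto simp: final_level_instance_def\<close>)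

definition planted :: "point set \<Rightarrow> nat \<Rightarrow> (point \<Rightarrow> nat) \<Rightarrow> nat \<Rightarrow> real \<Rightarrow> point \<Rightarrow> nat \<Rightarrow> real" where
  "planted X T cl j t = final_level_instance X T (\<lambda>x. if cl x = j then t else 1/2)"

definition payoff :: "nat \<Rightarrow> point set \<Rightarrow> nat \<Rightarrow> det_alg \<Rightarrow> (point \<Rightarrow> nat \<Rightarrow> real) \<Rightarrow> real" where
  "payoff B X T alg A = A (alg_output B X T alg A) T"

lemma planted_payoff_pair_le:
  fixes alg :: det_alg and X :: "point set" and B T :: nat
  defines "H \<equiv> run_history B alg X T (final_level_instance X T (\<lambda>_. 1/2)) []"
  assumes unseen: "j \<notin> cl ` {x\<in>X. T \<le> cnt x H}"
  shows "2 * payoff B X T alg (planted X T cl j 0) + payoff B X T alg (planted X T cl j 1) \<le> 3/2"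
proof -
  have same_output: "alg_output B X T alg (planted X T cl j t) = snd alg H" for t
  proof -
    have "run_history B alg X T (planted X T cl j t) [] = H"
      unfolding H_def planted_def
      by (rule run_history_final_level_cong) (use unseen in \<open>auto simp: H_def\<close>)
    then show ?thesis by (simp add: alg_output_def run_eq_output_of_run_history)
  qed
  show ?thesis
    unfolding payoff_def same_output by (simp add: planted_def final_level_instance_def)
qed

lemma planted_payoff_sum_le:
  assumes "finite X" and "T \<ge> 1"
  shows "(\<Sum>j<k. 2 * payoff B X T alg (planted X T cl j 0) + payoff B X T alg (planted X T cl j 1))
         \<le> 3/2 * k + 1/2 * real (B div T)"
proof -
  define H where "H = run_history B alg X T (final_level_instance X T (\<lambda>_. 1/2)) []"
  define J where "J = cl ` {x\<in>X. T \<le> cnt x H}"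
  have "card {x\<in>X. T \<le> cnt x H} * T \<le> length H"
    using \<open>finite X\<close> by (rule card_saturated_mult_le_length)
  also have "length H \<le> B"
    using length_run_history_le[of B alg X T _ "[]"] by (simp add: H_def)
  finally have "card {x\<in>X. T \<le> cnt x H} \<le> B div T"
    using \<open>T \<ge> 1\<close> by (simp add: less_eq_div_iff_mult_less_eq)
  moreover have "card J \<le> card {x\<in>X. T \<le> cnt x H}"
    unfolding J_def using \<open>finite X\<close> by (simp add: card_image_le)
  ultimately have card_J: "card J \<le> B div T" by simp
  have "2 * payoff B X T alg (planted X T cl j 0) + payoff B X T alg (planted X T cl j 1)
        \<le> 3/2 + (if j \<in> J then 1/2 else 0)" for j
  proof (cases "j \<in> J")
    case True
    then show ?thesis by (simp add: payoff_def planted_def final_level_instance_def)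
  next
    case False
    then show ?thesis using planted_payoff_pair_le[of j cl X T B alg] by (simp add: J_def H_def)
  qed
  then have "(\<Sum>j<k. 2 * payoff B X T alg (planted X T cl j 0) + payoff B X T alg (planted X T cl j 1))
        \<le> (\<Sum>j<k. 3/2 + (if j \<in> J then 1/2 else 0))"
    by (intro sum_mono)
  also have "\<dots> = 3/2 * k + 1/2 * card ({..<k} \<inter> J)"
    by (simp add: sum.distrib sum.If_cases)
  also have "card ({..<k} \<inter> J) \<le> card J"
    using card_J by (intro card_mono) (auto simp: J_def \<open>finite X\<close>)
  finally show ?thesis using card_J by simp
qed

lemma planted_expected_sum_le:
  assumes "rand_alg X T B M" and "finite X" and "T \<ge> 1"
  shows "(\<Sum>j<k. 2 * expected_value B X T M (planted X T cl j 0) + expected_value B X T M (planted X T cl j 1))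
         \<le> 3/2 * k + 1/2 * real (B div T)"
proof -
  interpret prob_space M
    using assms(1) by (simp add: rand_alg_def)
  let ?f = "\<lambda>j alg. 2 * payoff B X T alg (planted X T cl j 0) + payoff B X T alg (planted X T cl j 1)"
  have integrable: "integrable M (\<lambda>alg. payoff B X T alg (planted X T cl j t))" if "0 \<le> t" "t \<le> 1" for j t
  proof (rule integrable_const_bound[where B = 1])
    show "AE alg in M. norm (payoff B X T alg (planted X T cl j t)) \<le> 1"
      using that by (intro AE_I2) (simp add: payoff_def planted_def final_level_instance_def)
    show "(\<lambda>alg. payoff B X T alg (planted X T cl j t)) \<in> borel_measurable M"
      using assms(1) by (simp add: rand_alg_def payoff_def)
  qed
  have "(\<Sum>j<k. 2 * expected_value B X T M (planted X T cl j 0) + expected_value B X T M (planted X T cl j 1))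
      = (\<Sum>j<k. \<integral>alg. ?f j alg \<partial>M)"
    by (simp add: expected_value_def payoff_def[symmetric] integrable)
  also have "\<dots> = \<integral>alg. (\<Sum>j<k. ?f j alg) \<partial>M"
    by (rule Bochner_Integration.integral_sum[symmetric]) (simp add: integrable)
  also have "\<dots> \<le> \<integral>alg. 3/2 * k + 1/2 * real (B div T) \<partial>M"
    using assms(2,3) by (intro integral_mono planted_payoff_sum_le) (simp_all add: integrable)
  also have "\<dots> = 3/2 * k + 1/2 * real (B div T)"
    by (simp add: prob_space)
  finally show ?thesis .
qed

lemma separated_clusters_lower_bound:
  fixes cl :: "point \<Rightarrow> nat" and k :: nat and \<alpha> \<delta> \<epsilon> :: real
  assumes "rand_alg X T B M" and "finite X" and "T \<ge> 1" and "0 \<le> \<epsilon>"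
    and separated: "\<forall>xi\<in>X. \<forall>xj\<in>X. cl xi \<noteq> cl xj \<longrightarrow> \<delta> \<le> ddist d xi xj" and "1 \<le> \<epsilon> * \<delta>"
    and clusters: "\<forall>j<k. \<exists>x\<in>X. cl x = j" and "2 \<le> k"
    and \<alpha>: "3 * k + real (B div T) < 4 * \<alpha> * k"
  shows "\<exists>A. valid_instance d X T \<epsilon> A \<and> expected_value B X T M A < \<alpha> * Max ((\<lambda>x. A x T) ` X)"
proof (rule ccontr)
  assume "\<not> ?thesis"
  then have competitive: "\<alpha> * Max ((\<lambda>x. A x T) ` X) \<le> expected_value B X T M A"
    if "valid_instance d X T \<epsilon> A" for A
    using that by (auto simp: not_less)
  have "1 \<le> \<epsilon> * ddist d xi xj" if "xi \<in> X" "xj \<in> X" "cl xi \<noteq> cl xj" for xi xj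
    using separated that \<open>1 \<le> \<epsilon> * \<delta>\<close> \<open>0 \<le> \<epsilon>\<close> by (meson mult_left_mono order_trans)
  then have valid: "valid_instance d X T \<epsilon> (planted X T cl j t)" if "0 \<le> t" "t \<le> 1" for j t
    unfolding planted_def
    by (intro valid_final_level_instance) (use that \<open>0 \<le> \<epsilon>\<close> in \<open>auto split: if_splits\<close>)
  have "0 < 4 * \<alpha> * k"
    using \<alpha> of_nat_0_le_iff[of k] of_nat_0_le_iff[of "B div T"] by linarith
  then have "0 \<le> \<alpha>"
    by (simp add: zero_less_mult_iff)
  have expected_ge: "\<alpha> * t \<le> expected_value B X T M (planted X T cl j s)"
    if "x \<in> X" "planted X T cl j s x T = t" "0 \<le> s" "s \<le> 1" for j s t x
  proof -
    have "t \<le> Max ((\<lambda>x. planted X T cl j s x T) ` X)"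
      using that \<open>finite X\<close> by (auto intro: Max_ge)
    then have "\<alpha> * t \<le> \<alpha> * Max ((\<lambda>x. planted X T cl j s x T) ` X)"
      using \<open>0 \<le> \<alpha>\<close> by (rule mult_left_mono)
    also have "\<dots> \<le> expected_value B X T M (planted X T cl j s)"
      using that by (intro competitive valid)
    finally show ?thesis .
  qed
  have "2 * \<alpha> \<le> 2 * expected_value B X T M (planted X T cl j 0) + expected_value B X T M (planted X T cl j 1)"
    if "j < k" for j
  proof -
    obtain x where "x \<in> X" "cl x = j"
      using clusters \<open>j < k\<close> by blast
    then have planted_one: "\<alpha> * 1 \<le> expected_value B X T M (planted X T cl j 1)"
      by (intro expected_ge) (auto simp: planted_def final_level_instance_def)
    define j' where "j' = (if j = 0 then 1 else 0::nat)"
    have "j' < k" "j' \<noteq> j"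
      using \<open>2 \<le> k\<close> by (auto simp: j'_def)
    then obtain y where "y \<in> X" "cl y \<noteq> j"
      using clusters by metis
    then have planted_zero: "\<alpha> * (1/2) \<le> expected_value B X T M (planted X T cl j 0)"
      by (intro expected_ge) (auto simp: planted_def final_level_instance_def)
    show ?thesis
      using planted_one planted_zero by simp
  qed
  then have "(\<Sum>j<k. 2 * \<alpha>)
      \<le> (\<Sum>j<k. 2 * expected_value B X T M (planted X T cl j 0) + expected_value B X T M (planted X T cl j 1))"
    by (intro sum_mono) simp
  also have "\<dots> \<le> 3/2 * k + 1/2 * real (B div T)"
    using assms(1-3) by (rule planted_expected_sum_le)
  finally show False
    using \<alpha> by (simp add: algebra_simps)
qed

section \<open>Clustering radii\<close>

lemma ddist_pos:
  assumes "x \<in> Rd d" "y \<in> Rd d" "x \<noteq> y"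
  shows "0 < ddist d x y"
proof -
  obtain i where "x i \<noteq> y i"
    using \<open>x \<noteq> y\<close> by blast
  moreover have "i < d"
    using assms calculation by (auto simp: Rd_def not_less)
  ultimately have "0 < (\<Sum>i<d. (x i - y i)^2)"
    by (intro sum_pos2[of _ i]) auto
  then show ?thesis
    by (simp add: ddist_def)
qed

definition cover_radius :: "nat \<Rightarrow> point set \<Rightarrow> point set \<Rightarrow> real" where
  "cover_radius d X C = Max ((\<lambda>x. Min ((\<lambda>c. ddist d x c) ` C)) ` X)"

lemma opt_radius_eq_Min_cover_radius:
  "opt_radius d X m = Min {cover_radius d X C | C. C \<subseteq> X \<and> card C = m}"
  by (simp add: opt_radius_def cover_radius_def)

lemma finite_cover_radii: "finite X \<Longrightarrow> finite {cover_radius d X C | C. C \<subseteq> X \<and> card C = m}"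
  by (intro finite_image_set finite_Collect_conjI) (simp add: finite_Collect_subsets)

lemma cover_radius_pos:
  assumes "finite X" "X \<subseteq> Rd d" "C \<subseteq> X" "C \<noteq> {}" "C \<noteq> X"
  shows "0 < cover_radius d X C"
proof -
  obtain x where x: "x \<in> X" "x \<notin> C"
    using \<open>C \<subseteq> X\<close> \<open>C \<noteq> X\<close> by blast
  have "finite C"
    using assms(1,3) finite_subset by blast
  moreover have "0 < ddist d x c" if "c \<in> C" for c
    using assms(2,3) x that by (intro ddist_pos) auto
  ultimately have "0 < Min ((\<lambda>c. ddist d x c) ` C)"
    using \<open>C \<noteq> {}\<close> by simp
  also have "\<dots> \<le> cover_radius d X C"
    unfolding cover_radius_def using \<open>finite X\<close> x by (intro Max_ge) auto
  finally show ?thesis .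
qed

lemma cover_radius_le:
  assumes "finite X" "C \<subseteq> X" "X \<noteq> {}" and covered: "\<forall>x\<in>X. \<exists>c\<in>C. ddist d x c \<le> r"
  shows "cover_radius d X C \<le> r"
  unfolding cover_radius_def
proof (intro Max.boundedI)
  fix y assume "y \<in> (\<lambda>x. Min ((\<lambda>c. ddist d x c) ` C)) ` X"
  then obtain x c where "y = Min ((\<lambda>c. ddist d x c) ` C)" "c \<in> C" "ddist d x c \<le> r"
    using covered by blast
  moreover have "finite C"
    using assms(1,2) finite_subset by blast
  ultimately show "y \<le> r"
    by (metis Min_le finite_imageI image_eqI order_trans)
qed (use assms(1,3) in auto)

lemma opt_radius_pos:
  assumes "finite X" "X \<subseteq> Rd d" "0 < m" "m < card X"
  shows "0 < opt_radius d X m"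
  unfolding opt_radius_eq_Min_cover_radius
proof (subst Min_gr_iff)
  show "finite {cover_radius d X C | C. C \<subseteq> X \<and> card C = m}"
    using \<open>finite X\<close> by (rule finite_cover_radii)
  obtain C where "C \<subseteq> X" "card C = m"
    using \<open>m < card X\<close> by (meson less_imp_le obtain_subset_with_card_n)
  then show "{cover_radius d X C | C. C \<subseteq> X \<and> card C = m} \<noteq> {}"
    by blast
  have "0 < cover_radius d X C" if "C \<subseteq> X" "card C = m" for C
    using assms that by (intro cover_radius_pos) auto
  then show "\<forall>r\<in>{cover_radius d X C | C. C \<subseteq> X \<and> card C = m}. 0 < r"
    by blast
qed

lemma opt_radius_le:
  assumes "finite X" "C \<subseteq> X" "card C = m" "X \<noteq> {}"
    and "\<forall>x\<in>X. \<exists>c\<in>C. ddist d x c \<le> r"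
  shows "opt_radius d X m \<le> r"
proof -
  have "opt_radius d X m \<le> cover_radius d X C"
    unfolding opt_radius_eq_Min_cover_radius
    using assms(2,3) by (intro Min_le finite_cover_radii \<open>finite X\<close>) blast
  also have "\<dots> \<le> r"
    using assms(1,2,4,5) by (rule cover_radius_le)
  finally show ?thesis .
qed

section \<open>Pairs of points on a line\<close>

definition on_axis :: "real \<Rightarrow> point" where
  "on_axis a = (\<lambda>i. if i = 0 then a else 0)"

lemma ddist_on_axis: "ddist 1 (on_axis a) (on_axis b) = \<bar>a - b\<bar>"
  by (simp add: ddist_def on_axis_def)

lemma on_axis_eq_iff: "on_axis a = on_axis b \<longleftrightarrow> a = b"
  by (metis on_axis_def)

definition pair_position :: "nat \<Rightarrow> nat" where
  "pair_position m = 16 * (m div 2) + m mod 2"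

definition paired_points :: "real \<Rightarrow> nat \<Rightarrow> point set" where
  "paired_points s k = (\<lambda>m. on_axis (s * pair_position m)) ` {..<2 * k}"

definition pair_label :: "real \<Rightarrow> point \<Rightarrow> nat" where
  "pair_label s x = nat \<lfloor>x 0 / s\<rfloor> div 16"

lemma pair_position_dist_far:
  assumes "m div 2 \<noteq> m' div 2"
  shows "15 \<le> \<bar>int (pair_position m) - int (pair_position m')\<bar>"
proof -
  have "m mod 2 \<le> 1" "m' mod 2 \<le> 1" by auto
  then show ?thesis
    using assms unfolding pair_position_def by linarith
qed

lemma pair_position_dist_near:
  assumes "m div 2 = m' div 2"
  shows "\<bar>int (pair_position m) - int (pair_position m')\<bar> \<le> 1"
proof -
  have "m mod 2 \<le> 1" "m' mod 2 \<le> 1" by auto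
  then show ?thesis
    using assms unfolding pair_position_def by linarith
qed

lemma inj_pair_position: "inj pair_position"
proof (rule injI)
  fix m m' assume eq: "pair_position m = pair_position m'"
  then have "m div 2 = m' div 2"
    using pair_position_dist_far by fastforce
  moreover from this eq have "m mod 2 = m' mod 2"
    by (simp add: pair_position_def)
  ultimately show "m = m'"
    by (metis div_mult_mod_eq)
qed

lemma ddist_paired:
  fixes s :: real
  assumes "0 < s"
  shows "ddist 1 (on_axis (s * pair_position m)) (on_axis (s * pair_position m'))
    = s * \<bar>int (pair_position m) - int (pair_position m')\<bar>"
  unfolding ddist_on_axis using assms by (simp add: abs_mult flip: right_diff_distrib)

lemma paired_points_subset_Rd: "paired_points s k \<subseteq> Rd 1"
  by (auto simp: paired_points_def on_axis_def Rd_def)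

lemma finite_paired_points: "finite (paired_points s k)"
  by (simp add: paired_points_def)

lemma pair_label_on_axis:
  assumes "0 < s"
  shows "pair_label s (on_axis (s * pair_position m)) = m div 2"
  using assms by (simp add: pair_label_def on_axis_def) (simp add: pair_position_def)

lemma card_paired_points:
  assumes "0 < s"
  shows "card (paired_points s k) = 2 * k"
proof -
  have "inj_on (\<lambda>m. on_axis (s * pair_position m)) {..<2 * k}"
    using assms by (intro inj_onI) (simp add: on_axis_eq_iff inj_eq[OF inj_pair_position])
  then show ?thesis
    by (simp add: paired_points_def card_image)
qed

lemma paired_points_cover_labels:
  assumes "0 < s" "j < k"
  shows "\<exists>x\<in>paired_points s k. pair_label s x = j"
proof
  show "on_axis (s * pair_position (2 * j)) \<in> paired_points s k"
    using assms(2) by (simp add: paired_points_def)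
qed (simp add: pair_label_on_axis[OF assms(1)])

lemma paired_points_separated:
  assumes "0 < s" "x \<in> paired_points s k" "y \<in> paired_points s k" "pair_label s x \<noteq> pair_label s y"
  shows "15 * s \<le> ddist 1 x y"
proof -
  obtain m m' where "x = on_axis (s * pair_position m)" "y = on_axis (s * pair_position m')"
    and "m div 2 \<noteq> m' div 2"
    using assms by (auto simp: paired_points_def pair_label_on_axis)
  moreover have "15 \<le> real_of_int \<bar>int (pair_position m) - int (pair_position m')\<bar>"
    using pair_position_dist_far[OF \<open>m div 2 \<noteq> m' div 2\<close>] by linarith
  ultimately show ?thesis
    using ddist_paired[OF assms(1), of m m'] assms(1) by simp
qed

lemma opt_radius_paired_points_le:
  assumes "0 < s" "0 < k"
  shows "opt_radius 1 (paired_points s k) k \<le> s"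
proof -
  let ?x = "\<lambda>m. on_axis (s * pair_position m)"
  define C where "C = (\<lambda>j. ?x (2 * j)) ` {..<k}"
  have "C \<subseteq> paired_points s k"
    by (auto simp: C_def paired_points_def)
  moreover have "card C = k"
    unfolding C_def using assms(1)
    by (subst card_image) (auto intro!: inj_onI simp: on_axis_eq_iff inj_eq[OF inj_pair_position])
  moreover have "\<exists>c\<in>C. ddist 1 x c \<le> s" if x: "x \<in> paired_points s k" for x
  proof -
    obtain m where "m < 2 * k" "x = ?x m"
      using x by (auto simp: paired_points_def)
    moreover have "real_of_int \<bar>int (pair_position m) - int (pair_position (2 * (m div 2)))\<bar> \<le> 1"
      using pair_position_dist_near[of m "2 * (m div 2)"] by simp
    ultimately have "?x (2 * (m div 2)) \<in> C" "ddist 1 x (?x (2 * (m div 2))) \<le> s"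
      using ddist_paired[OF assms(1), of m "2 * (m div 2)"] assms(1) by (auto simp: C_def)
    then show ?thesis by blast
  qed
  moreover have "paired_points s k \<noteq> {}"
    using assms(2) by (simp add: paired_points_def lessThan_empty_iff)
  ultimately show ?thesis
    by (intro opt_radius_le[of _ C]) (simp_all add: paired_points_def)
qed

theorem corollary1:
  fixes \<epsilon> :: real and T B :: nat
  assumes "\<epsilon> > 0" and "T \<ge> 1" and "B \<ge> T"
  defines "k \<equiv> 2 * (B div T)"
  shows "\<exists>d X. finite X \<and> X \<subseteq> Rd d \<and> k \<le> card X \<and> opt_radius d X k > 0 \<and>
    (\<forall>M. rand_alg X T B M \<longrightarrow>
       (\<forall>\<alpha>. \<alpha> > 1 - \<epsilon> * opt_radius d X k \<longrightarrow>
          (\<exists>A. valid_instance d X T \<epsilon> A \<and>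
               expected_value B X T M A < \<alpha> * Max ((\<lambda>x. A x T) ` X))))"
proof -
  have "0 < B div T"
    using assms(2,3) by (simp add: div_greater_zero_iff)
  then have "2 \<le> k"
    by (simp add: k_def)
  define s where "s = 1 / (8 * \<epsilon>)"
  have "0 < s" "\<epsilon> * s = 1/8"
    using assms(1) by (simp_all add: s_def)
  let ?X = "paired_points s k"
  have "opt_radius 1 ?X k \<le> s"
    using \<open>0 < s\<close> \<open>2 \<le> k\<close> by (intro opt_radius_paired_points_le) auto
  then have radius: "\<epsilon> * opt_radius 1 ?X k \<le> 1/8"
    using assms(1) \<open>\<epsilon> * s = 1/8\<close> by (metis mult_left_mono less_imp_le)
  show ?thesis
  proof (intro exI[of _ 1] exI[of _ ?X] conjI allI impI)
    show "0 < opt_radius 1 ?X k"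
      using \<open>0 < s\<close> \<open>2 \<le> k\<close> by (intro opt_radius_pos finite_paired_points paired_points_subset_Rd)
        (auto simp: card_paired_points)
  next
    fix M \<alpha> assume "rand_alg ?X T B M" and \<alpha>: "1 - \<epsilon> * opt_radius 1 ?X k < \<alpha>"
    moreover have "3 * k + real (B div T) < 4 * \<alpha> * k"
      using \<alpha> radius \<open>0 < B div T\<close> by (simp add: k_def)
    moreover have "1 \<le> \<epsilon> * (15 * s)"
      using \<open>\<epsilon> * s = 1/8\<close> by simp
    ultimately show "\<exists>A. valid_instance 1 ?X T \<epsilon> A \<and> expected_value B ?X T M A < \<alpha> * Max ((\<lambda>x. A x T) ` ?X)"
      using assms(1,2) \<open>0 < s\<close> \<open>2 \<le> k\<close> paired_points_separated[OF \<open>0 < s\<close>, of _ k]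
      by (intro separated_clusters_lower_bound[where cl = "pair_label s" and \<delta> = "15 * s"])
        (auto intro: paired_points_cover_labels finite_paired_points)
  qed (use \<open>0 < s\<close> card_paired_points finite_paired_points paired_points_subset_Rd in simp_all)
qed

end
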